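(* Let $V$ be a separable real Banach space with topological dual $V^*$, and let $M\subset V^*$ be a linearly independent set of continuous linear functionals that separates the points of $V$ and is fundamental with respect to the weak$^*$-topology (i.e. its linear span is weak$^*$-dense in $V^*$). Let $X=(X_m)_{m\in M}$ be a random variable with values in $(\mathbb R^M,\bigotimes_{m\in M}\mathcal B(\mathbb R))$ on a complete probability space $(\Omega,\mathcal F,\mathbb P)$, such that $X$ almost surely lies in the range of the embedding $V\ni v\mapsto (m(v))_{m\in M}\in\mathbb R^M$. Then there is a random variable $\tilde X:\Omega\to V$ which is measurable with respect to the Borel $\sigma$-algebra of $V$ and whose image under this embedding equals $X$ almost surely, i.e. $m(\tilde X)=X_m$ for all $m\in M$ almost surely.
   Context: The embedding $v\mapsto(m(v))_{m\in M}$ is injective since $M$ separates points. All random variables live on a complete probability space. *)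

theory Defs
  imports "HOL-Analysis.Analysis" "HOL-Probability.Probability"
begin

text \<open>The weak-star topology on the dual space: the initial topology of the
  evaluation maps, i.e. the pullback of the product topology on functions
  along the map sending a functional to its underlying function.\<close>
definition weak_star_topology :: "('v::real_normed_vector \<Rightarrow>\<^sub>L real) topology" where
  "weak_star_topology = pullback_topology UNIV blinfun_apply euclidean"

end

theory Submission imports Defs begin

text \<open>Pick Xt \<omega> pointwise as a preimage of X \<omega> under the embedding. Since P is complete,
  each m \<circ> Xt with m \<in> M is measurable, as it agrees a.e. with the coordinate X m. Hence the
  sets with measurable preimage under Xt form a \<sigma>-algebra \<Sigma> containing all half-spaces
  {m < q} and {m > q}, so for distinct points x and y some set of \<Sigma> contains a neighbourhood
  of x and avoids a neighbourhood of y. In a complete separable metric space such a \<Sigma> contains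
  every closed set: if two disjoint closed sets were not separated by a set of \<Sigma>, covering both
  by countably many balls of half the radius would give a non-separated pair of smaller pieces;
  iterating, the two nested sequences shrink to distinct points, which \<Sigma> does separate.\<close>

lemma (in complete_measure) measurable_if_AE_eq:
  assumes f: "f \<in> M \<rightarrow>\<^sub>M N" and eq: "AE x in M. g x = f x" and g: "g \<in> space M \<rightarrow> space N"
  shows "g \<in> M \<rightarrow>\<^sub>M N"
proof (rule measurableI)
  show "g x \<in> space N" if "x \<in> space M" for x
    using g that by blast
  fix A assume A: "A \<in> sets N"
  have "AE x in M. x \<in> f -` A \<inter> space M \<longleftrightarrow> x \<in> g -` A \<inter> space M"
    using eq by eventually_elim auto
  then show "g -` A \<inter> space M \<in> sets M"
    using in_sets_AE measurable_sets[OF f A] by blast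
qed

lemma sigma_algebra_measurable_preimages:
  "sigma_algebra UNIV {A. f -` A \<inter> space M \<in> sets M}"
  unfolding sigma_algebra_iff2
proof (intro conjI ballI allI impI)
  show "{A. f -` A \<inter> space M \<in> sets M} \<subseteq> Pow UNIV" "{} \<in> {A. f -` A \<inter> space M \<in> sets M}"
    by auto
next
  fix A assume "A \<in> {A. f -` A \<inter> space M \<in> sets M}"
  moreover have "f -` (UNIV - A) \<inter> space M = space M - (f -` A \<inter> space M)"
    by auto
  ultimately show "UNIV - A \<in> {A. f -` A \<inter> space M \<in> sets M}"
    by auto
next
  fix A :: "nat \<Rightarrow> _" assume "range A \<subseteq> {A. f -` A \<inter> space M \<in> sets M}"
  then have "(\<Union>i. f -` A i \<inter> space M) \<in> sets M"
    by (intro sets.countable_UN) auto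
  moreover have "f -` (\<Union>i. A i) \<inter> space M = (\<Union>i. f -` A i \<inter> space M)"
    by auto
  ultimately show "(\<Union>i. A i) \<in> {A. f -` A \<inter> space M \<in> sets M}"
    by auto
qed

definition separated_by :: "'a set set \<Rightarrow> 'a set \<Rightarrow> 'a set \<Rightarrow> bool" where
  "separated_by \<Sigma> A B \<longleftrightarrow> (\<exists>S\<in>\<Sigma>. A \<subseteq> S \<and> S \<inter> B = {})"

lemma separated_by_Union:
  assumes \<Sigma>: "sigma_algebra UNIV \<Sigma>" and "countable \<A>" "countable \<B>"
    and sep: "\<And>A B. A \<in> \<A> \<Longrightarrow> B \<in> \<B> \<Longrightarrow> separated_by \<Sigma> A B"
  shows "separated_by \<Sigma> (\<Union>\<A>) (\<Union>\<B>)"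
proof -
  obtain S where S: "\<And>A B. A \<in> \<A> \<Longrightarrow> B \<in> \<B> \<Longrightarrow> S A B \<in> \<Sigma> \<and> A \<subseteq> S A B \<and> S A B \<inter> B = {}"
    using sep unfolding separated_by_def by metis
  interpret sigma_algebra UNIV \<Sigma> by (fact \<Sigma>)
  have "(\<Union>A\<in>\<A>. \<Inter>B\<in>\<B>. S A B) \<in> \<Sigma>"
    using S \<open>countable \<A>\<close> \<open>countable \<B>\<close> by (intro countable_UN'' countable_INT'') auto
  moreover have "\<Union>\<A> \<subseteq> (\<Union>A\<in>\<A>. \<Inter>B\<in>\<B>. S A B)" "(\<Union>A\<in>\<A>. \<Inter>B\<in>\<B>. S A B) \<inter> \<Union>\<B> = {}"
    using S by blast+
  ultimately show ?thesis
    unfolding separated_by_def by blast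
qed

lemma not_separated_by_nonempty:
  assumes "sigma_algebra UNIV \<Sigma>" and "\<not> separated_by \<Sigma> A B"
  shows "A \<noteq> {}" "B \<noteq> {}"
proof -
  have "{} \<in> \<Sigma>" "UNIV \<in> \<Sigma>"
    using assms(1) by (auto simp: sigma_algebra_iff2)
  then show "A \<noteq> {}" "B \<noteq> {}"
    using assms(2) unfolding separated_by_def by blast+
qed

lemma not_separated_by_cball_pieces:
  fixes A B :: "'a::metric_space set"
  assumes \<Sigma>: "sigma_algebra UNIV \<Sigma>" and sep: "separable_space (euclidean :: 'a topology)"
    and ns: "\<not> separated_by \<Sigma> A B" and "r > 0"
  obtains a b where "\<not> separated_by \<Sigma> (A \<inter> cball a r) (B \<inter> cball b r)"
proof -
  obtain D :: "'a set" where "countable D" and dense: "closure D = UNIV"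
    using sep unfolding separable_space_def by auto
  have cover: "S = (\<Union>d\<in>D. S \<inter> cball d r)" for S :: "'a set"
  proof -
    have "x \<in> (\<Union>d\<in>D. cball d r)" for x
      using dense \<open>r > 0\<close> closure_approachable[of x D] by (fastforce simp: dist_commute)
    then show ?thesis by blast
  qed
  have "\<exists>a\<in>D. \<exists>b\<in>D. \<not> separated_by \<Sigma> (A \<inter> cball a r) (B \<inter> cball b r)"
  proof (rule ccontr)
    assume "\<not> ?thesis"
    then have "separated_by \<Sigma> (\<Union>d\<in>D. A \<inter> cball d r) (\<Union>d\<in>D. B \<inter> cball d r)"
      using \<open>countable D\<close> by (intro separated_by_Union[OF \<Sigma>]) auto
    then show False
      using ns cover[of A] cover[of B] by simp
  qed
  then show thesis
    using that by blast
qed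

lemma closed_nest_shrinks_to_point:
  fixes S :: "nat \<Rightarrow> 'a::complete_space set"
  assumes closed: "\<And>n. closed (S n)" and nonempty: "\<And>n. S n \<noteq> {}" and "decseq S"
    and small: "\<And>n. \<exists>c. S n \<subseteq> cball c (r n)" and r: "r \<longlonglongrightarrow> 0"
  obtains x where "\<And>n. x \<in> S n" "\<And>e. e > 0 \<Longrightarrow> eventually (\<lambda>n. S n \<subseteq> ball x e) sequentially"
proof -
  have diam: "eventually (\<lambda>n. \<forall>y\<in>S n. \<forall>z\<in>S n. dist y z < e) sequentially" if "e > 0" for e
  proof -
    have "eventually (\<lambda>n. r n < e / 2) sequentially"
      using r \<open>e > 0\<close> by (intro order_tendstoD) auto
    then show ?thesis
    proof eventually_elim
      case (elim n)
      obtain c where c: "S n \<subseteq> cball c (r n)"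
        using small by blast
      show ?case
      proof (intro ballI)
        fix y z assume "y \<in> S n" "z \<in> S n"
        then have "dist c y \<le> r n" "dist c z \<le> r n"
          using c by auto
        then show "dist y z < e"
          using elim dist_triangle[of y z c] by (simp add: dist_commute)
      qed
    qed
  qed
  have mono: "S n \<subseteq> S m" if "m \<le> n" for m n
    using \<open>decseq S\<close> that by (simp add: decseq_def)
  have "\<exists>n. \<forall>y\<in>S n. \<forall>z\<in>S n. dist y z < e" if "e > 0" for e
    using diam[OF that] by (auto simp: eventually_sequentially)
  then obtain x where x: "\<And>n. x \<in> S n"
    using decreasing_closed_nest[of S, OF closed nonempty mono] by blast
  show thesis
  proof (rule that[OF x])
    fix e :: real assume "e > 0"
    show "eventually (\<lambda>n. S n \<subseteq> ball x e) sequentially"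
      using diam[OF \<open>e > 0\<close>] by eventually_elim (use x in auto)
  qed
qed

lemma not_separated_by_closed_nest:
  fixes A B :: "'a::metric_space set"
  assumes \<Sigma>: "sigma_algebra UNIV \<Sigma>" and sep: "separable_space (euclidean :: 'a topology)"
    and A: "closed A" and B: "closed B" and ns: "\<not> separated_by \<Sigma> A B"
  obtains C E :: "nat \<Rightarrow> 'a set"
  where "\<And>n. \<not> separated_by \<Sigma> (C n) (E n)" "\<And>n. closed (C n)" "\<And>n. closed (E n)"
    "\<And>n. C n \<subseteq> A" "\<And>n. E n \<subseteq> B" "decseq C" "decseq E"
    "\<And>n. \<exists>c. C n \<subseteq> cball c ((1/2)^n)" "\<And>n. \<exists>c. E n \<subseteq> cball c ((1/2)^n)"
proof -
  define candidate where "candidate p \<longleftrightarrow> \<not> separated_by \<Sigma> (fst p) (snd p) \<and>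
    closed (fst p) \<and> closed (snd p) \<and> fst p \<subseteq> A \<and> snd p \<subseteq> B" for p :: "'a set \<times> 'a set"
  define small where "small n p \<longleftrightarrow> (\<forall>i\<in>{fst p, snd p}. \<exists>c. i \<subseteq> cball c ((1/2)^n))"
    for n and p :: "'a set \<times> 'a set"
  have refine: "\<exists>q. (candidate q \<and> small n q) \<and> fst q \<subseteq> fst p \<and> snd q \<subseteq> snd p"
    if cand: "candidate p" for n p
  proof -
    obtain a b where "\<not> separated_by \<Sigma> (fst p \<inter> cball a ((1/2)^n)) (snd p \<inter> cball b ((1/2)^n))"
      using not_separated_by_cball_pieces[OF \<Sigma> sep, of "fst p" "snd p" "(1/2)^n"] cand
      unfolding candidate_def by auto
    then have "candidate (fst p \<inter> cball a ((1/2)^n), snd p \<inter> cball b ((1/2)^n))"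
      and "small n (fst p \<inter> cball a ((1/2)^n), snd p \<inter> cball b ((1/2)^n))"
      using cand unfolding candidate_def small_def by auto
    then show ?thesis by fastforce
  qed
  have "candidate (A, B)"
    using ns A B unfolding candidate_def by simp
  then have "\<exists>q. candidate q \<and> small 0 q"
    using refine by blast
  moreover have "\<exists>q'. (candidate q' \<and> small (Suc n) q') \<and> fst q' \<subseteq> fst q \<and> snd q' \<subseteq> snd q"
    if "candidate q \<and> small n q" for n q
    using refine that by blast
  ultimately have "\<exists>p. \<forall>n. (candidate (p n) \<and> small n (p n)) \<and>
      fst (p (Suc n)) \<subseteq> fst (p n) \<and> snd (p (Suc n)) \<subseteq> snd (p n)"
    by (rule dependent_nat_choice[where Q = "\<lambda>n q q'. fst q' \<subseteq> fst q \<and> snd q' \<subseteq> snd q"])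
  then obtain p where "\<And>n. candidate (p n) \<and> small n (p n)"
    and "decseq (\<lambda>n. fst (p n))" "decseq (\<lambda>n. snd (p n))"
    by (auto simp: decseq_Suc_iff)
  then show thesis
    using that[of "\<lambda>n. fst (p n)" "\<lambda>n. snd (p n)"] unfolding candidate_def small_def by auto
qed

lemma separated_by_closed:
  fixes A B :: "'a::complete_space set"
  assumes \<Sigma>: "sigma_algebra UNIV \<Sigma>" and sep: "separable_space (euclidean :: 'a topology)"
    and points: "\<And>x y. x \<noteq> y \<Longrightarrow> \<exists>U\<in>\<Sigma>. x \<in> interior U \<and> y \<notin> closure U"
    and A: "closed A" and B: "closed B" and "A \<inter> B = {}"
  shows "separated_by \<Sigma> A B"
proof (rule ccontr)
  assume "\<not> separated_by \<Sigma> A B"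
  then obtain C E where ns: "\<And>n. \<not> separated_by \<Sigma> (C n) (E n)"
    and closed: "\<And>n. closed (C n)" "\<And>n. closed (E n)" and sub: "C 0 \<subseteq> A" "E 0 \<subseteq> B"
    and decseq: "decseq C" "decseq E"
    and small: "\<And>n. \<exists>c. C n \<subseteq> cball c ((1/2)^n)" "\<And>n. \<exists>c. E n \<subseteq> cball c ((1/2)^n)"
    using not_separated_by_closed_nest[OF \<Sigma> sep A B] by metis
  have nonempty: "C n \<noteq> {}" "E n \<noteq> {}" for n
    using not_separated_by_nonempty[OF \<Sigma> ns] by auto
  have radii: "(\<lambda>n. (1/2::real)^n) \<longlonglongrightarrow> 0"
    by (rule LIMSEQ_realpow_zero) simp_all
  obtain x where x: "\<And>n. x \<in> C n"
    and shrink_x: "\<And>e. e > 0 \<Longrightarrow> eventually (\<lambda>n. C n \<subseteq> ball x e) sequentially"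
    using closed_nest_shrinks_to_point[OF closed(1) nonempty(1) decseq(1) small(1) radii] by blast
  obtain y where y: "\<And>n. y \<in> E n"
    and shrink_y: "\<And>e. e > 0 \<Longrightarrow> eventually (\<lambda>n. E n \<subseteq> ball y e) sequentially"
    using closed_nest_shrinks_to_point[OF closed(2) nonempty(2) decseq(2) small(2) radii] by blast
  have "x \<noteq> y"
    using x[of 0] y[of 0] sub \<open>A \<inter> B = {}\<close> by auto
  then obtain U where "U \<in> \<Sigma>" "x \<in> interior U" "y \<in> interior (- U)"
    using points by (auto simp: interior_complement)
  then obtain e1 e2 where "e1 > 0" "ball x e1 \<subseteq> U" "e2 > 0" "ball y e2 \<subseteq> - U"
    by (meson mem_interior)
  have "eventually (\<lambda>n. C n \<subseteq> ball x e1 \<and> E n \<subseteq> ball y e2) sequentially"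
    using shrink_x[OF \<open>e1 > 0\<close>] shrink_y[OF \<open>e2 > 0\<close>] by (rule eventually_conj)
  then obtain n where "C n \<subseteq> ball x e1" "E n \<subseteq> ball y e2"
    by (auto simp: eventually_sequentially)
  with \<open>ball x e1 \<subseteq> U\<close> \<open>ball y e2 \<subseteq> - U\<close> have "C n \<subseteq> U" "E n \<subseteq> - U"
    by blast+
  then have "separated_by \<Sigma> (C n) (E n)"
    using \<open>U \<in> \<Sigma>\<close> unfolding separated_by_def by blast
  with ns show False
    by blast
qed

lemma closed_mem_sigma_algebra:
  fixes F :: "'a::complete_space set"
  assumes \<Sigma>: "sigma_algebra UNIV \<Sigma>" and sep: "separable_space (euclidean :: 'a topology)"
    and points: "\<And>x y. x \<noteq> y \<Longrightarrow> \<exists>U\<in>\<Sigma>. x \<in> interior U \<and> y \<notin> closure U"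
    and "closed F"
  shows "F \<in> \<Sigma>"
proof -
  define G where "G j = (\<Inter>y\<in>F. {x. 1 / real (Suc j) \<le> dist x y})" for j
  have "closed (G j)" for j
    unfolding G_def by (intro closed_INT closed_Collect_le continuous_intros ballI)
  moreover have "F \<inter> G j = {}" for j
    unfolding G_def by force
  ultimately have "separated_by \<Sigma> F (G j)" for j
    using separated_by_closed[OF \<Sigma> sep points \<open>closed F\<close>] by blast
  then have "separated_by \<Sigma> (\<Union>{F}) (\<Union>(range G))"
    by (intro separated_by_Union[OF \<Sigma>]) auto
  then obtain S where "S \<in> \<Sigma>" "F \<subseteq> S" "S \<inter> \<Union>(range G) = {}"
    unfolding separated_by_def by auto
  moreover have "- F \<subseteq> \<Union>(range G)"
  proof
    fix x assume "x \<in> - F"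
    then obtain e where "e > 0" "ball x e \<subseteq> - F"
      using \<open>closed F\<close> open_contains_ball by (metis open_Compl)
    moreover obtain j where "1 / real (Suc j) < e"
      using \<open>e > 0\<close> by (metis nat_approx_posE)
    ultimately have "x \<in> G j"
      unfolding G_def by (force simp: subset_iff)
    then show "x \<in> \<Union>(range G)" by blast
  qed
  ultimately have "S = F"
    by blast
  with \<open>S \<in> \<Sigma>\<close> show ?thesis
    by simp
qed

lemma borel_measurable_if_point_separating_continuous:
  fixes f :: "'b \<Rightarrow> 'a::complete_space" and \<Phi> :: "('a \<Rightarrow> real) set"
  assumes sep: "separable_space (euclidean :: 'a topology)"
    and cont: "\<And>\<phi>. \<phi> \<in> \<Phi> \<Longrightarrow> continuous_on UNIV \<phi>"
    and separating: "\<And>x y. x \<noteq> y \<Longrightarrow> \<exists>\<phi>\<in>\<Phi>. \<phi> x \<noteq> \<phi> y"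
    and meas: "\<And>\<phi>. \<phi> \<in> \<Phi> \<Longrightarrow> (\<lambda>\<omega>. \<phi> (f \<omega>)) \<in> borel_measurable M"
  shows "f \<in> borel_measurable M"
proof -
  define \<Sigma> where "\<Sigma> = {A. f -` A \<inter> space M \<in> sets M}"
  have \<Sigma>_sigma: "sigma_algebra UNIV \<Sigma>"
    unfolding \<Sigma>_def by (rule sigma_algebra_measurable_preimages)
  have halfspaces: "{v. \<phi> v < q} \<in> \<Sigma>" "{v. q < \<phi> v} \<in> \<Sigma>" if "\<phi> \<in> \<Phi>" for \<phi> q
  proof -
    have "(\<lambda>\<omega>. \<phi> (f \<omega>)) -` {..<q} \<inter> space M \<in> sets M" "(\<lambda>\<omega>. \<phi> (f \<omega>)) -` {q<..} \<inter> space M \<in> sets M"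
      using meas[OF that] by (auto intro: measurable_sets)
    then show "{v. \<phi> v < q} \<in> \<Sigma>" "{v. q < \<phi> v} \<in> \<Sigma>"
      unfolding \<Sigma>_def by (simp_all add: vimage_def Int_def)
  qed
  have points: "\<exists>U\<in>\<Sigma>. x \<in> interior U \<and> y \<notin> closure U" if xy: "x \<noteq> y" for x y
  proof -
    obtain \<phi> where \<phi>: "\<phi> \<in> \<Phi>" "\<phi> x \<noteq> \<phi> y"
      using separating[OF xy] by blast
    define q where "q = (\<phi> x + \<phi> y) / 2"
    have "interior {v. \<phi> v < q} = {v. \<phi> v < q}" "interior {v. q < \<phi> v} = {v. q < \<phi> v}"
      using cont[OF \<phi>(1)] by (auto intro!: interior_open open_Collect_less continuous_intros)
    moreover have "closure {v. \<phi> v < q} \<subseteq> {v. \<phi> v \<le> q}" "closure {v. q < \<phi> v} \<subseteq> {v. q \<le> \<phi> v}"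
      using cont[OF \<phi>(1)]
      by (intro closure_minimal closed_Collect_le continuous_intros; force)+
    moreover have "\<phi> x < q \<and> q < \<phi> y \<or> \<phi> y < q \<and> q < \<phi> x"
      using \<phi>(2) unfolding q_def by (cases "\<phi> x < \<phi> y") auto
    ultimately show ?thesis
      using halfspaces[OF \<phi>(1)] by fastforce
  qed
  show ?thesis
  proof (rule borel_measurableI)
    fix S :: "'a set" assume "open S"
    then have "- S \<in> \<Sigma>"
      using closed_mem_sigma_algebra[OF \<Sigma>_sigma sep points] by blast
    then have "space M - (f -` (- S) \<inter> space M) \<in> sets M"
      unfolding \<Sigma>_def by auto
    moreover have "space M - (f -` (- S) \<inter> space M) = f -` S \<inter> space M"
      by auto
    ultimately show "f -` S \<inter> space M \<in> sets M"
      by simp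
  qed
qed

theorem lemma3p9:
  fixes M :: "('v::banach \<Rightarrow>\<^sub>L real) set"
    and P :: "'w measure"
    and X :: "'w \<Rightarrow> ('v \<Rightarrow>\<^sub>L real) \<Rightarrow> real"
  assumes sep: "separable_space (euclidean :: 'v topology)"
    and indep: "independent M"
    and separates: "\<forall>x y. x \<noteq> y \<longrightarrow> (\<exists>m\<in>M. blinfun_apply m x \<noteq> blinfun_apply m y)"
    and fundamental: "weak_star_topology closure_of (span M) = UNIV"
    and prob: "prob_space P"
    and compl: "complete_measure P"
    and X_meas: "X \<in> measurable P (PiM M (\<lambda>_. borel))"
    and X_range: "AE \<omega> in P. \<exists>v. \<forall>m\<in>M. X \<omega> m = blinfun_apply m v"
  shows "\<exists>Xt. Xt \<in> borel_measurable P \<and> (AE \<omega> in P. \<forall>m\<in>M. blinfun_apply m (Xt \<omega>) = X \<omega> m)"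
proof -
  define Xt where "Xt \<omega> = (SOME v. \<forall>m\<in>M. X \<omega> m = blinfun_apply m v)" for \<omega>
  have representative: "\<forall>m\<in>M. blinfun_apply m (Xt \<omega>) = X \<omega> m"
    if "\<exists>v. \<forall>m\<in>M. X \<omega> m = blinfun_apply m v" for \<omega>
    using someI_ex[OF that] unfolding Xt_def by simp
  have agree: "AE \<omega> in P. \<forall>m\<in>M. blinfun_apply m (Xt \<omega>) = X \<omega> m"
    using X_range representative by (rule eventually_mono)
  have "(\<lambda>\<omega>. blinfun_apply m (Xt \<omega>)) \<in> borel_measurable P" if "m \<in> M" for m
  proof (rule complete_measure.measurable_if_AE_eq[OF compl])
    show "(\<lambda>\<omega>. X \<omega> m) \<in> borel_measurable P"
      using measurable_compose[OF X_meas measurable_component_singleton[OF that]] by simp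
    show "AE \<omega> in P. blinfun_apply m (Xt \<omega>) = X \<omega> m"
      using agree by eventually_elim (use that in blast)
  qed simp
  moreover have "continuous_on UNIV (blinfun_apply m)" for m :: "'v \<Rightarrow>\<^sub>L real"
    by (intro linear_continuous_on blinfun.bounded_linear_right)
  ultimately have "Xt \<in> borel_measurable P"
    using separates
    by (intro borel_measurable_if_point_separating_continuous[OF sep, of "blinfun_apply ` M"]) auto
  with agree show ?thesis
    by blast
qed

end
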